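(* Let $\mathcal{I},\mathcal{J}$ be ideals on $\omega$ with $\mathcal{J}\le_{\mathrm{KB}}\mathcal{I}$. If Player II has a winning strategy in the tallness game with respect to $\mathcal{J}$, then Player II has a winning strategy in the tallness game with respect to $\mathcal{I}$.
   Context: Ideals on $\omega$ are assumed to contain all finite sets. For ideals $\mathcal{J}$ on $X$ and $\mathcal{I}$ on $Y$, $\mathcal{J}\le_{\mathrm{KB}}\mathcal{I}$ means there is a finite-to-one function $f:Y\to X$ with $f^{-1}(J)\in\mathcal{I}$ for every $J\in\mathcal{J}$. For an ideal $\mathcal{I}$ on $\omega$, the tallness game with respect to $\mathcal{I}$: at round $k$, Player I plays $n_k\in\omega$ with $n_0<n_1<\cdots$ and then Player II plays $i_k\in\{0,1\}$. Player II wins iff $\{n_k: i_k=1\}$ is infinite and belongs to $\mathcal{I}$. *)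

theory Defs
  imports Main
begin

definition is_ideal :: "nat set set \<Rightarrow> bool" where
  "is_ideal I \<longleftrightarrow>
     (\<forall>A. finite A \<longrightarrow> A \<in> I) \<and>
     (\<forall>A B. A \<in> I \<longrightarrow> B \<subseteq> A \<longrightarrow> B \<in> I) \<and>
     (\<forall>A B. A \<in> I \<longrightarrow> B \<in> I \<longrightarrow> A \<union> B \<in> I) \<and>
     UNIV \<notin> I"

definition finite_to_one :: "(nat \<Rightarrow> nat) \<Rightarrow> bool" where
  "finite_to_one f \<longleftrightarrow> (\<forall>x. finite (f -` {x}))"

definition KB_le :: "nat set set \<Rightarrow> nat set set \<Rightarrow> bool" where
  "KB_le J I \<longleftrightarrow> (\<exists>f. finite_to_one f \<and> (\<forall>A\<in>J. f -` A \<in> I))"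

text \<open>A strategy for Player II maps the list [n_0,...,n_k] of Player I's moves so
  far to Player II's answer i_k (True = 1, False = 0). Player II's own earlier
  moves are determined by the strategy, so this loses no generality.\<close>
definition tall_game_II_wins :: "nat set set \<Rightarrow> (nat list \<Rightarrow> bool) \<Rightarrow> bool" where
  "tall_game_II_wins I \<sigma> \<longleftrightarrow>
     (\<forall>n :: nat \<Rightarrow> nat. strict_mono n \<longrightarrow>
        (let W = {n k | k. \<sigma> (map n [0..<Suc k])} in infinite W \<and> W \<in> I))"

definition II_has_winning_strategy :: "nat set set \<Rightarrow> bool" where
  "II_has_winning_strategy I \<longleftrightarrow> (\<exists>\<sigma>. tall_game_II_wins I \<sigma>)"

end

theory Submission
  imports Defs "HOL-Library.Infinite_Set"
begin

text \<open>Let \<open>f\<close> witness \<open>J \<le>KB I\<close> and let \<open>\<sigma>\<close> win the tallness game for \<open>J\<close>.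
  Against a play \<open>n\<^sub>0 < n\<^sub>1 < \<dots>\<close> in the game for \<open>I\<close>, Player II only reacts at the
  record times \<open>k\<close>, where \<open>f n\<^sub>k\<close> exceeds all earlier values \<open>f n\<^sub>i\<close>. Since \<open>f\<close> is
  finite-to-one there are infinitely many records, and the record values form a strictly
  increasing play for \<open>J\<close>; Player II answers a record as \<open>\<sigma>\<close> answers the corresponding
  move of that simulated play. The set \<open>W\<close> of moves answered by 1 then satisfies
  \<open>W \<subseteq> f -` W'\<close> and \<open>f ` W = W'\<close>, where \<open>W'\<close> is the infinite set in \<open>J\<close> won by \<open>\<sigma>\<close>.\<close>

definition record_times :: "(nat \<Rightarrow> nat) \<Rightarrow> nat set" where
  "record_times g = {i. \<forall>i'<i. g i' < g i}"

definition record_values :: "(nat \<Rightarrow> nat) \<Rightarrow> nat list \<Rightarrow> nat list" where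
  "record_values f xs =
     map (\<lambda>i. f (xs ! i)) (filter (\<lambda>i. i \<in> record_times (\<lambda>i. f (xs ! i))) [0..<length xs])"

definition pullback_strategy :: "(nat \<Rightarrow> nat) \<Rightarrow> (nat list \<Rightarrow> bool) \<Rightarrow> nat list \<Rightarrow> bool" where
  "pullback_strategy f \<sigma> xs \<longleftrightarrow>
     xs \<noteq> [] \<and> length xs - 1 \<in> record_times (\<lambda>i. f (xs ! i)) \<and> \<sigma> (record_values f xs)"

lemma record_times_cong:
  assumes "\<And>i'. i' \<le> i \<Longrightarrow> g i' = h i'"
  shows "i \<in> record_times g \<longleftrightarrow> i \<in> record_times h"
  using assms by (auto simp: record_times_def)

lemma finite_to_one_comp_inj:
  assumes "finite_to_one f" and "inj n"
  shows "finite_to_one (f \<circ> n)"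
  using assms by (simp add: finite_to_one_def vimage_comp[symmetric] finite_vimageI)

lemma infinite_record_times:
  assumes "finite_to_one g"
  shows "infinite (record_times g)"
proof
  assume "finite (record_times g)"
  then obtain B where B: "\<And>i. i \<in> record_times g \<Longrightarrow> i \<le> B"
    by (auto simp: finite_nat_set_iff_bounded_le)
  define M where "M = Max (g ` {0..B})"
  have "g -` {0..M} = (\<Union>x\<in>{0..M}. g -` {x})" by auto
  then have "finite (g -` {0..M})"
    using assms by (auto simp: finite_to_one_def)
  then obtain i where "i \<notin> g -` {0..M}"
    using ex_new_if_finite[OF infinite_UNIV_nat] by blast
  then have "g i > M" by auto
  define i0 where "i0 = (LEAST i. g i > M)"
  have "g i0 > M"
    unfolding i0_def using \<open>g i > M\<close> by (rule LeastI)
  moreover have "g i' \<le> M" if "i' < i0" for i'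
    using not_less_Least[OF that[unfolded i0_def]] by simp
  ultimately have "i0 \<in> record_times g"
    by (auto simp: record_times_def intro: le_less_trans)
  then have "g i0 \<le> M"
    unfolding M_def using B by (intro Max_ge) auto
  with \<open>g i0 > M\<close> show False by simp
qed

lemma strict_mono_record_values:
  assumes "infinite (record_times g)"
  shows "strict_mono (g \<circ> enumerate (record_times g))"
proof (rule strict_monoI)
  fix j j' :: nat assume "j < j'"
  then have "enumerate (record_times g) j < enumerate (record_times g) j'"
    using assms by simp
  moreover have "enumerate (record_times g) j' \<in> record_times g"
    using assms by (rule enumerate_in_set)
  ultimately show "(g \<circ> enumerate (record_times g)) j < (g \<circ> enumerate (record_times g)) j'"
    by (simp add: record_times_def)
qed

lemma filter_upt_enumerate:
  fixes S :: "nat set"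
  assumes "infinite S"
  shows "filter (\<lambda>i. i \<in> S) [0..<Suc (enumerate S j)] = map (enumerate S) [0..<Suc j]"
proof (rule sorted_distinct_set_unique)
  show "sorted (filter (\<lambda>i. i \<in> S) [0..<Suc (enumerate S j)])"
    by (rule sorted_wrt_filter) (simp del: upt_Suc)
  show "sorted (map (enumerate S) [0..<Suc j])"
    using assms by (auto simp: sorted_iff_nth_mono less_Suc_eq_le simp del: upt_Suc)
  show "distinct (map (enumerate S) [0..<Suc j])"
    using inj_enumerate[OF assms] by (simp add: distinct_map inj_on_subset[of _ UNIV] del: upt_Suc)
  have "set (filter (\<lambda>i. i \<in> S) [0..<Suc (enumerate S j)]) = {x \<in> S. x \<le> enumerate S j}"
    by (auto simp del: upt_Suc)
  also have "\<dots> = enumerate S ` {..j}"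
  proof (intro equalityI subsetI)
    fix x assume "x \<in> {x \<in> S. x \<le> enumerate S j}"
    then obtain j' where "x = enumerate S j'" "enumerate S j' \<le> enumerate S j"
      using range_enumerate[OF assms] by auto
    then show "x \<in> enumerate S ` {..j}"
      using assms by simp
  qed (use assms in \<open>auto intro: enumerate_in_set\<close>)
  also have "\<dots> = set (map (enumerate S) [0..<Suc j])"
    by (auto simp del: upt_Suc)
  finally show "set (filter (\<lambda>i. i \<in> S) [0..<Suc (enumerate S j)]) = \<dots>" .
qed simp

lemma pullback_strategy_iff:
  fixes f n :: "nat \<Rightarrow> nat"
  defines "e \<equiv> enumerate (record_times (f \<circ> n))"
  assumes "infinite (record_times (f \<circ> n))"
  shows "pullback_strategy f \<sigma> (map n [0..<Suc k]) \<longleftrightarrow>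
           (\<exists>j. k = e j \<and> \<sigma> (map (f \<circ> n \<circ> e) [0..<Suc j]))"
proof -
  let ?xs = "map n [0..<Suc k]"
  have records: "i \<in> record_times (\<lambda>i. f (?xs ! i)) \<longleftrightarrow> i \<in> record_times (f \<circ> n)"
    if "i \<le> k" for i
    using that by (intro record_times_cong) (simp del: upt_Suc)
  show ?thesis
  proof (cases "k \<in> record_times (f \<circ> n)")
    case False
    then have "k \<notin> range e"
      using range_enumerate[OF assms(2)] by (simp add: e_def)
    with False show ?thesis
      by (auto simp: pullback_strategy_def records simp del: upt_Suc)
  next
    case True
    then obtain j where k: "k = e j"
      using range_enumerate[OF assms(2)] by (auto simp: e_def)
    have "filter (\<lambda>i. i \<in> record_times (\<lambda>i. f (?xs ! i))) [0..<length ?xs]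
            = filter (\<lambda>i. i \<in> record_times (f \<circ> n)) [0..<Suc k]"
      by (rule filter_cong) (auto simp: records simp del: upt_Suc)
    also have "\<dots> = map e [0..<Suc j]"
      unfolding k e_def by (rule filter_upt_enumerate[OF assms(2)])
    finally have "record_values f ?xs = map (f \<circ> n \<circ> e) [0..<Suc j]"
      using strict_mono_enumerate[OF assms(2)]
      by (simp add: record_values_def k e_def strict_mono_less_eq less_Suc_eq_le del: upt_Suc)
    moreover have "k = e j' \<longleftrightarrow> j' = j" for j'
      using inj_enumerate[OF assms(2)] by (auto simp: k e_def dest: injD)
    ultimately show ?thesis
      using True by (simp add: pullback_strategy_def records del: upt_Suc)
  qed
qed

lemma pullback_strategy_wins:
  assumes I: "\<And>A B. A \<in> I \<Longrightarrow> B \<subseteq> A \<Longrightarrow> B \<in> I"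
    and f: "finite_to_one f" "\<And>A. A \<in> J \<Longrightarrow> f -` A \<in> I"
    and \<sigma>: "tall_game_II_wins J \<sigma>"
  shows "tall_game_II_wins I (pullback_strategy f \<sigma>)"
  unfolding tall_game_II_wins_def Let_def
proof (intro allI impI)
  fix n :: "nat \<Rightarrow> nat" assume "strict_mono n"
  define e where "e = enumerate (record_times (f \<circ> n))"
  have "infinite (record_times (f \<circ> n))"
    using f(1) \<open>strict_mono n\<close>
    by (intro infinite_record_times finite_to_one_comp_inj strict_mono_imp_inj_on)
  define W' where "W' = {(f \<circ> n \<circ> e) j | j. \<sigma> (map (f \<circ> n \<circ> e) [0..<Suc j])}"
  have W': "infinite W' \<and> W' \<in> J"
    using \<sigma> strict_mono_record_values[OF \<open>infinite (record_times (f \<circ> n))\<close>]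
    unfolding tall_game_II_wins_def W'_def e_def Let_def comp_assoc by blast
  define W where "W = {n k | k. pullback_strategy f \<sigma> (map n [0..<Suc k])}"
  have W: "W = {n (e j) | j. \<sigma> (map (f \<circ> n \<circ> e) [0..<Suc j])}"
    unfolding W_def e_def pullback_strategy_iff[OF \<open>infinite (record_times (f \<circ> n))\<close>]
    by blast
  have "W \<subseteq> f -` W'" and "W' \<subseteq> f ` W"
    unfolding W W'_def by auto
  then have "W \<in> I" and "infinite W"
    using I f(2) W' finite_surj by blast+
  then show "infinite W \<and> W \<in> I" by blast
qed

theorem mainTheorem12:
  assumes "is_ideal I" and "is_ideal J"
    and "KB_le J I"
    and "II_has_winning_strategy J"
  shows "II_has_winning_strategy I"
proof -
  obtain f where "finite_to_one f" and "\<forall>A\<in>J. f -` A \<in> I"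
    using assms(3) unfolding KB_le_def by blast
  moreover obtain \<sigma> where "tall_game_II_wins J \<sigma>"
    using assms(4) unfolding II_has_winning_strategy_def by blast
  moreover have "\<And>A B. A \<in> I \<Longrightarrow> B \<subseteq> A \<Longrightarrow> B \<in> I"
    using assms(1) unfolding is_ideal_def by blast
  ultimately have "tall_game_II_wins I (pullback_strategy f \<sigma>)"
    by (intro pullback_strategy_wins) auto
  then show ?thesis
    unfolding II_has_winning_strategy_def by blast
qed

end
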